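(* Let $\pi\in\mathsf{G}_{r,n}$ and $b=\text{B-code}(\pi)$. Then for each $1\le t\le r-1$: (1) $\mathsf{Cyc}^0(\pi)=\mathsf{Max}^0(b)$ and $\mathsf{Cyc}^t(\pi)=\mathsf{Max}^{r-t}(b)$; (2) $\mathsf{Lmic}^0(\pi)=\mathsf{Min}^0(b)$ and $\mathsf{Lmic}^t(\pi)=\mathsf{Min}^{r-t}(b)$; (3) $\mathsf{Lmap}^0(\pi)=\mathsf{Rmil}^0(b)$ and $\mathsf{Lmap}^t(\pi)=\mathsf{Rmil}^{r-t}(b)$; (4) $\mathsf{Lmal}^0(\pi)=\mathsf{Rmip}^0(b)$ and $\mathsf{Lmal}^t(\pi)=\mathsf{Rmip}^{r-t}(b)$.
   Context: $\mathsf{G}_{r,n}=C_r\wr\mathfrak S_n$: words $\pi=\sigma_1^{[z_1]}\cdots\sigma_n^{[z_n]}$, $\sigma\in\mathfrak S_n$, colors $z_i\in\mathbb Z/r$ (represented in $\{0,\dots,r-1\}$). $\pi$ acts on $\Sigma=\{i^{[t]}:i\in[n],t\in\mathbb Z/r\}$ by $\pi(i^{[t]})=\sigma_i^{[z_i+t]}$; $i^{[0]}$ is written $i$. For $1\le i<j$, right multiplication of a word $\tau_1^{[y_1]}\cdots\tau_j^{[y_j]}$ by $(i^{[t]}\,j)$ replaces the letter in position $j$ by $\tau_i^{[y_i+t]}$ and the letter in position $i$ by $\tau_j^{[y_j-t]}$. B-code: $\pi^{(n)}=\pi$; for $j=n,\dots,1$, $c_j$ = position in $\pi^{(j)}$ of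 the letter with base value $j$, $z$ its color, $e_j\equiv -z\pmod r$ in $\{0,\dots,r-1\}$; $\pi^{(j-1)}$ = first $j-1$ letters of $\pi^{(j)}\cdot(c_j^{[e_j]}\,j)$ if $c_j<j$, of $\pi^{(j)}$ if $c_j=j$. $\text{B-code}(\pi)=(c_1^{[e_1]},\dots,c_n^{[e_n]})$. Statistics of $\pi$: $\mathsf{Lmal}(\pi)=\{\sigma_i^{[z_i]}:\sigma_i>\sigma_j\ \forall j<i\}$; $\mathsf{Lmap}(\pi)=\{i^{[z_i]}:\sigma_i>\sigma_j\ \forall j<i\}$; for a word $w_1\cdots w_m$ of colored letters, $\mathsf{Lmil}(w)$ is the set of $w_k$ whose base value is smaller than the base values of all $w_{k'}$, $k'<k$. $\mathsf{Cyc}(\pi)$: for each cycle of $\sigma$ with element set $B$, take $\alpha=\min B$ and $c\equiv\sum_{k\in B}z_k\pmod r$; $\mathsf{Cyc}(\pi)$ is the set of all such $\alpha^{[c]}$. $\mathsf{Lmic}(\pi)=\mathsf{Lmil}(\pi(1)\,\pi^2(1)\cdots\pi^m(1))$ where $m\ge1$ is least with $\pi^m(1)=1$. Statistics of $b=(c_1^{[e_1]},\dots,c_n^{[e_n]})$: $\mathsf{Max}(b)=\{i^{[e_i]}:c_i=i\}$, $\mathsf{Min}(b)=\{i^{[e_i]}:c_i=1\}$, $\mathsf{Rmil}(b)=\{c_i^{[e_i]}:c_i<c_j\ \forall j>i\}$, $\mathsf{Rmip}(b)=\{i^{[e_i]}:c_i<c_j\ \forall j>i\}$. For a set $S$ of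 colored letters, $S^t=\{k:k^{[t]}\in S\}$. *)

theory Defs
  imports Main
begin

text \<open>A colored letter i^[t] is the pair (i, t) with t represented in {0..r-1}.
  An element of G_{r,n} is its window word sigma_1^[z_1] ... sigma_n^[z_n],
  a list of colored letters (positions are 1-based in the paper, 0-based in lists).\<close>

type_synonym cletter = "nat \<times> nat"

definition in_G :: "nat \<Rightarrow> nat \<Rightarrow> cletter list \<Rightarrow> bool" where
  "in_G r n w \<longleftrightarrow> length w = n \<and> distinct (map fst w) \<and> set (map fst w) = {1..n}
     \<and> (\<forall>x\<in>set w. snd x < r)"

text \<open>Right multiplication of a word by (i^[t] j), 1 <= i < j <= length w (1-based).\<close>
definition rmul :: "nat \<Rightarrow> cletter list \<Rightarrow> nat \<Rightarrow> nat \<Rightarrow> nat \<Rightarrow> cletter list" where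
  "rmul r w i t j =
     (w[j - 1 := (fst (w ! (i - 1)), (snd (w ! (i - 1)) + t) mod r)])
       [i - 1 := (fst (w ! (j - 1)), (snd (w ! (j - 1)) + (r - t mod r)) mod r)]"

definition pos_of :: "cletter list \<Rightarrow> nat \<Rightarrow> nat" where
  "pos_of w j = Suc (LEAST k. k < length w \<and> fst (w ! k) = j)"

text \<open>B-code: bcode_aux r j w processes pi^(j) = w (of length j) and returns
  (c_1^[e_1], ..., c_j^[e_j]) as the list of pairs (c_i, e_i).\<close>
primrec bcode_aux :: "nat \<Rightarrow> nat \<Rightarrow> cletter list \<Rightarrow> cletter list" where
  "bcode_aux r 0 w = []"
| "bcode_aux r (Suc j) w =
     (let c = pos_of w (Suc j);
          z = snd (w ! (c - 1));
          e = (r - z mod r) mod r;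
          w' = (if c < Suc j then take j (rmul r w c e (Suc j)) else take j w)
      in bcode_aux r j w' @ [(c, e)])"

definition bcode :: "nat \<Rightarrow> cletter list \<Rightarrow> cletter list" where
  "bcode r w = bcode_aux r (length w) w"

definition sig :: "cletter list \<Rightarrow> nat \<Rightarrow> nat" where
  "sig w i = fst (w ! (i - 1))"

definition col :: "cletter list \<Rightarrow> nat \<Rightarrow> nat" where
  "col w i = snd (w ! (i - 1))"

definition Lmal :: "cletter list \<Rightarrow> cletter set" where
  "Lmal w = {w ! (i - 1) | i. i \<in> {1..length w} \<and> (\<forall>j. 1 \<le> j \<and> j < i \<longrightarrow> sig w i > sig w j)}"

definition Lmap :: "cletter list \<Rightarrow> cletter set" where
  "Lmap w = {(i, col w i) | i. i \<in> {1..length w} \<and> (\<forall>j. 1 \<le> j \<and> j < i \<longrightarrow> sig w i > sig w j)}"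

definition Lmil :: "cletter list \<Rightarrow> cletter set" where
  "Lmil u = {u ! k | k. k < length u \<and> (\<forall>k'<k. fst (u ! k) < fst (u ! k'))}"

definition cycle_of :: "cletter list \<Rightarrow> nat \<Rightarrow> nat set" where
  "cycle_of w i = {(sig w ^^ k) i | k. True}"

definition Cyc :: "nat \<Rightarrow> cletter list \<Rightarrow> cletter set" where
  "Cyc r w = {(Min (cycle_of w i), (\<Sum>k\<in>cycle_of w i. col w k) mod r) | i. i \<in> {1..length w}}"

definition act :: "nat \<Rightarrow> cletter list \<Rightarrow> cletter \<Rightarrow> cletter" where
  "act r w x = (sig w (fst x), (col w (fst x) + snd x) mod r)"

definition Lmic :: "nat \<Rightarrow> cletter list \<Rightarrow> cletter set" where
  "Lmic r w = (let m = (LEAST m. m \<ge> 1 \<and> (act r w ^^ m) (1, 0) = (1, 0))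
               in Lmil (map (\<lambda>k. (act r w ^^ k) (1, 0)) [1..<Suc m]))"

definition Maxb :: "cletter list \<Rightarrow> cletter set" where
  "Maxb b = {(i, snd (b ! (i - 1))) | i. i \<in> {1..length b} \<and> fst (b ! (i - 1)) = i}"

definition Minb :: "cletter list \<Rightarrow> cletter set" where
  "Minb b = {(i, snd (b ! (i - 1))) | i. i \<in> {1..length b} \<and> fst (b ! (i - 1)) = 1}"

definition Rmil :: "cletter list \<Rightarrow> cletter set" where
  "Rmil b = {b ! (i - 1) | i. i \<in> {1..length b} \<and>
     (\<forall>j. i < j \<and> j \<le> length b \<longrightarrow> fst (b ! (i - 1)) < fst (b ! (j - 1)))}"

definition Rmip :: "cletter list \<Rightarrow> cletter set" where
  "Rmip b = {(i, snd (b ! (i - 1))) | i. i \<in> {1..length b} \<and>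
     (\<forall>j. i < j \<and> j \<le> length b \<longrightarrow> fst (b ! (i - 1)) < fst (b ! (j - 1)))}"

definition colpart :: "cletter set \<Rightarrow> nat \<Rightarrow> nat set" where
  "colpart S t = {k. (k, t) \<in> S}"

end

(*
  Compare every statistic along the recursion that defines the B-code. Passing from pi^(n+1) to
  pi^(n) removes the letter of base value n+1 (at position c, with color z) and appends c^[-z]
  to the code. On cycles this deletes n+1 from its cycle and merges its color into that of its
  predecessor c, so every other cycle keeps its minimum and its total color, and (n+1)^[z] is a
  cycle exactly when c = n+1, i.e. when the code gains a Max entry. On the orbit of 1^[0] the
  deletion only skips letters of base value n+1, which changes the left-to-right minima at most
  by a first step to n+1, i.e. when c = 1. The left-to-right maxima of pi are those of pi^(n)
  left of c together with position c, matching how appending c^[-z] changes the right-to-left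
  minima of the code. So each statistic of pi is the corresponding statistic of the code with
  all colors negated, and comparing color classes gives the theorem.
*)

theory Submission
  imports Defs
begin

definition negmod :: "nat \<Rightarrow> nat \<Rightarrow> nat" where
  "negmod r z = (r - z) mod r"

definition negate_colors :: "nat \<Rightarrow> cletter set \<Rightarrow> cletter set" where
  "negate_colors r S = (\<lambda>(k, z). (k, negmod r z)) ` S"

lemma negmod_less: "0 < r \<Longrightarrow> negmod r z < r"
  by (simp add: negmod_def)

lemma negmod_negmod: "z < r \<Longrightarrow> negmod r (negmod r z) = z"
  by (cases "z = 0") (simp_all add: negmod_def)

lemma negmod_eq_iff: "z < r \<Longrightarrow> t < r \<Longrightarrow> negmod r z = t \<longleftrightarrow> z = negmod r t"
  using negmod_negmod by metis

lemma add_negmod_mod: "z < r \<Longrightarrow> (y + (r - negmod r z)) mod r = (z + y) mod r"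
  by (cases "z = 0") (simp_all add: negmod_def add.commute)

lemma colpart_negate_colors:
  assumes "\<forall>x\<in>S. snd x < r" and "t < r"
  shows "colpart (negate_colors r S) t = colpart S (negmod r t)"
proof -
  have "(k, t) \<in> negate_colors r S \<longleftrightarrow> (k, negmod r t) \<in> S" for k
  proof -
    have "(k, t) \<in> negate_colors r S \<longleftrightarrow> (\<exists>z. (k, z) \<in> S \<and> negmod r z = t)"
      unfolding negate_colors_def by force
    also have "\<dots> \<longleftrightarrow> (k, negmod r t) \<in> S"
      using assms negmod_eq_iff by fastforce
    finally show ?thesis .
  qed
  then show ?thesis by (simp add: colpart_def)
qed

lemma funpow_bij_betw_in: "bij_betw f S S \<Longrightarrow> x \<in> S \<Longrightarrow> (f ^^ k) x \<in> S"
  by (meson bij_betw_funpow bij_betwE)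

lemma funpow_return:
  assumes "finite S" and f: "bij_betw f S S" and x: "x \<in> S"
  obtains k where "0 < k" "(f ^^ k) x = x"
proof -
  have "(\<lambda>k. (f ^^ k) x) ` {0..card S} \<subseteq> S"
    using funpow_bij_betw_in[OF f x] by blast
  then have "\<not> inj_on (\<lambda>k. (f ^^ k) x) {0..card S}"
    using card_inj_on_le[OF _ _ \<open>finite S\<close>] by fastforce
  then obtain i j where ij: "i < j" "(f ^^ i) x = (f ^^ j) x"
    unfolding inj_on_def by (metis linorder_neqE_nat)
  have "(f ^^ i) ((f ^^ (j - i)) x) = (f ^^ (i + (j - i))) x"
    by (simp add: funpow_add)
  then have "(f ^^ i) ((f ^^ (j - i)) x) = (f ^^ i) x"
    using ij by simp
  moreover have "(f ^^ (j - i)) x \<in> S"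
    using funpow_bij_betw_in[OF f x] .
  ultimately have "(f ^^ (j - i)) x = x"
    using bij_betw_funpow[OF f, of i] x by (auto simp: bij_betw_def dest: inj_onD)
  with ij show ?thesis using that[of "j - i"] by simp
qed

lemma orbit_self: "x \<in> range (\<lambda>k. (f ^^ k) x)"
  by (rule range_eqI[of _ _ 0]) simp

lemma orbit_closed: "y \<in> range (\<lambda>k. (f ^^ k) x) \<Longrightarrow> f y \<in> range (\<lambda>k. (f ^^ k) x)"
proof -
  assume "y \<in> range (\<lambda>k. (f ^^ k) x)"
  then obtain k where "y = (f ^^ k) x" by blast
  then have "f y = (f ^^ Suc k) x" by simp
  then show ?thesis by blast
qed

lemma orbit_subset: "bij_betw f S S \<Longrightarrow> x \<in> S \<Longrightarrow> range (\<lambda>k. (f ^^ k) x) \<subseteq> S"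
  using funpow_bij_betw_in by (metis image_subsetI)

lemma orbit_of_image:
  assumes "finite S" and f: "bij_betw f S S" and x: "x \<in> S"
  shows "range (\<lambda>k. (f ^^ k) (f x)) = range (\<lambda>k. (f ^^ k) x)"
proof
  show "range (\<lambda>k. (f ^^ k) (f x)) \<subseteq> range (\<lambda>k. (f ^^ k) x)"
  proof -
    have "(f ^^ k) (f x) = (f ^^ Suc k) x" for k by (simp add: funpow_swap1)
    then show ?thesis by blast
  qed
next
  obtain m where m: "0 < m" "(f ^^ m) x = x" using funpow_return[OF assms] .
  have "(f ^^ k) x = (f ^^ (k + m - 1)) (f x)" for k
  proof -
    have "(f ^^ (k + m - 1)) (f x) = (f ^^ Suc (k + m - 1)) x"
      by (simp add: funpow_swap1)
    also have "\<dots> = (f ^^ (k + m)) x" using m(1) by simp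
    also have "\<dots> = (f ^^ k) x" using m(2) by (simp add: funpow_add)
    finally show ?thesis by simp
  qed
  then show "range (\<lambda>k. (f ^^ k) x) \<subseteq> range (\<lambda>k. (f ^^ k) (f x))" by blast
qed

lemma funpow_avoids_fixed_point:
  assumes f: "bij_betw f S S" and m: "m \<in> S" "f m = m" and i: "i \<in> S - {m}"
  shows "(f ^^ k) i \<noteq> m"
proof (induction k)
  case (Suc k)
  have "(f ^^ k) i \<in> S" using funpow_bij_betw_in[OF f] i by blast
  then have "f ((f ^^ k) i) \<noteq> f m"
    using Suc.IH m(1) f unfolding bij_betw_def by (meson inj_onD)
  then show ?case using m(2) by simp
qed (use i in simp)

text \<open>g is f with the point m short-circuited: m is removed from its cycle.\<close>

locale point_skipping =
  fixes S :: "'a set" and f g :: "'a \<Rightarrow> 'a" and m :: 'a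
  assumes bij: "bij_betw f S S" and m_in: "m \<in> S"
    and skip: "\<And>y. y \<in> S - {m} \<Longrightarrow> g y = (if f y = m then f m else f y)"
begin

lemma f_in: "y \<in> S \<Longrightarrow> f y \<in> S"
  using bij by (meson bij_betwE)

lemma f_eq_iff: "y \<in> S \<Longrightarrow> z \<in> S \<Longrightarrow> f y = f z \<longleftrightarrow> y = z"
  using bij by (meson bij_betw_def inj_on_eq_iff)

lemma orbit_skip_subset:
  assumes i: "i \<in> S - {m}"
  shows "range (\<lambda>k. (g ^^ k) i) \<subseteq> range (\<lambda>k. (f ^^ k) i) - {m}"
proof -
  have "(g ^^ k) i \<in> range (\<lambda>k. (f ^^ k) i) \<and> (g ^^ k) i \<in> S - {m}" for k
  proof (induction k)
    case (Suc k)
    define y where "y = (g ^^ k) i"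
    have y: "y \<in> range (\<lambda>k. (f ^^ k) i)" "y \<in> S - {m}" using Suc y_def by auto
    show ?case
    proof (cases "f y = m")
      case True
      then have "f m \<noteq> m" using f_eq_iff[of y m] y(2) m_in by auto
      then show ?thesis
        using True skip[OF y(2)] orbit_closed[OF orbit_closed[OF y(1)]] f_in[OF m_in]
        by (simp add: y_def)
    next
      case False
      then show ?thesis using skip[OF y(2)] orbit_closed[OF y(1)] f_in y(2) by (simp add: y_def)
    qed
  qed (use i orbit_self in auto)
  then show ?thesis by blast
qed

lemma orbit_skip_supset:
  assumes i: "i \<in> S - {m}"
  shows "range (\<lambda>k. (f ^^ k) i) - {m} \<subseteq> range (\<lambda>k. (g ^^ k) i)"
proof -
  let ?O = "range (\<lambda>k. (g ^^ k) i)"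
  have "((f ^^ k) i \<noteq> m \<longrightarrow> (f ^^ k) i \<in> ?O) \<and> ((f ^^ k) i = m \<longrightarrow> (f ^^ Suc k) i \<in> ?O)" for k
  proof (induction k)
    case 0
    then show ?case using i orbit_self by auto
  next
    case (Suc k)
    define x where "x = (f ^^ k) i"
    have x: "x \<in> S" using funpow_bij_betw_in[OF bij] i by (auto simp: x_def)
    have IH: "x \<noteq> m \<Longrightarrow> x \<in> ?O" "x = m \<Longrightarrow> f x \<in> ?O" using Suc by (simp_all add: x_def)
    have "f x \<in> ?O" if "f x \<noteq> m"
    proof (cases "x = m")
      case False
      then show ?thesis using IH(1) orbit_closed[of x g i] skip[of x] x that by simp
    qed (use IH(2) in simp)
    moreover have "f (f x) \<in> ?O" if "f x = m"
    proof (cases "x = m")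
      case True
      then show ?thesis
        using funpow_avoids_fixed_point[OF bij m_in _ i, of k] that by (simp add: x_def)
    next
      case False
      then show ?thesis using IH(1) orbit_closed[of x g i] skip[of x] x that by simp
    qed
    ultimately show ?case by (simp add: x_def)
  qed
  then show ?thesis by blast
qed

theorem orbit_skip:
  "i \<in> S - {m} \<Longrightarrow> range (\<lambda>k. (g ^^ k) i) = range (\<lambda>k. (f ^^ k) i) - {m}"
  using orbit_skip_subset orbit_skip_supset by (rule equalityI)

end

lemma Min_Diff_greater:
  fixes A :: "'a::linorder set"
  assumes "finite A" "x \<in> A" "x < m"
  shows "Min (A - {m}) = Min A"
proof (rule Min_eqI)
  have "Min A \<in> A" "Min A \<le> x" using assms by (auto intro: Min_in)
  with \<open>x < m\<close> show "Min A \<in> A - {m}" by auto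
  show "finite (A - {m})" using assms(1) by simp
  show "Min A \<le> y" if "y \<in> A - {m}" for y using that assms(1) by simp
qed

definition traj_lr_minima :: "('a \<Rightarrow> 'a) \<Rightarrow> ('a \<Rightarrow> nat) \<Rightarrow> 'a \<Rightarrow> 'a set" where
  "traj_lr_minima A g x0 = {(A ^^ k) x0 | k.
     1 \<le> k \<and> (\<forall>j. 1 \<le> j \<and> j < k \<longrightarrow> g ((A ^^ k) x0) < g ((A ^^ j) x0))}"

lemma traj_lr_minima_const:
  assumes "\<And>k. g ((A ^^ k) x0) = g x0"
  shows "traj_lr_minima A g x0 = {A x0}"
proof -
  have "k = 1" if "1 \<le> k" "\<forall>j. 1 \<le> j \<and> j < k \<longrightarrow> g ((A ^^ k) x0) < g ((A ^^ j) x0)" for k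
    using that(2)[rule_format, of 1] that(1) assms[of k] assms[of 1] by (cases "k = 1") auto
  then show ?thesis unfolding traj_lr_minima_def by (auto intro!: exI[of _ 1]) force
qed

lemma image_atLeastLessThan_Suc:
  "f ` {1..<Suc k} = f ` {1..<k} \<union> (if k = 0 then {} else {f k})"
  by (auto simp: less_Suc_eq)

locale level_skipping =
  fixes S :: "'a set" and g :: "'a \<Rightarrow> nat" and n :: nat and A A' :: "'a \<Rightarrow> 'a" and x0 :: 'a
  assumes x0: "x0 \<in> S" "g x0 \<noteq> n"
    and closed: "\<And>y. y \<in> S \<Longrightarrow> A y \<in> S"
    and skip: "\<And>y. y \<in> S \<Longrightarrow> g y \<noteq> n \<Longrightarrow> A' y = (if g (A y) = n then A (A y) else A y)"
    and no_double: "\<And>y. y \<in> S \<Longrightarrow> g y \<noteq> n \<Longrightarrow> g (A y) = n \<Longrightarrow> g (A (A y)) \<noteq> n"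
    and level_max: "\<And>y. y \<in> S \<Longrightarrow> g y \<le> n"
begin

definition traj :: "nat \<Rightarrow> 'a" where
  "traj k = (A ^^ k) x0"

definition traj' :: "nat \<Rightarrow> 'a" where
  "traj' k = (A' ^^ k) x0"

definition matched :: "nat \<Rightarrow> nat \<Rightarrow> bool" where
  "matched k' k \<longleftrightarrow> traj' k' = traj k \<and> traj' ` {1..<k'} = traj ` {1..<k} - {y. g y = n}
     \<and> (k' = 0 \<longleftrightarrow> k = 0)"

lemma traj_in: "traj k \<in> S"
  unfolding traj_def by (induction k) (use x0 closed in auto)

lemma traj'_in: "traj' k \<in> S \<and> g (traj' k) \<noteq> n"
proof (induction k)
  case (Suc k)
  then show ?case using closed no_double skip[of "traj' k"] by (auto simp: traj'_def)
qed (use x0 traj'_def in auto)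

lemma matched_0: "matched 0 0"
  by (simp add: matched_def traj_def traj'_def)

lemma matched_Suc:
  assumes "matched k' k"
  shows "(g (traj (Suc k)) \<noteq> n \<and> matched (Suc k') (Suc k))
    \<or> (g (traj (Suc k)) = n \<and> matched (Suc k') (Suc (Suc k)))"
proof -
  have "g (traj k) \<noteq> n" using assms traj'_in by (metis matched_def)
  then have traj'_Suc: "traj' (Suc k') = (if g (traj (Suc k)) = n then traj (Suc (Suc k)) else traj (Suc k))"
    using skip[OF traj_in[of k]] assms by (simp add: matched_def traj_def traj'_def)
  have "traj' ` {1..<Suc k'} = traj ` {1..<Suc k} - {y. g y = n}"
    using assms \<open>g (traj k) \<noteq> n\<close> unfolding matched_def image_atLeastLessThan_Suc by auto
  then show ?thesis
    using traj'_Suc unfolding matched_def image_atLeastLessThan_Suc[of traj "Suc k"] by auto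
qed

lemma matched_ex: "\<exists>k. matched k' k"
proof (induction k')
  case (Suc k')
  then show ?case using matched_Suc by blast
qed (use matched_0 in blast)

lemma matched_ex_or_skipped: "(\<exists>k'. matched k' k) \<or> (g (traj k) = n \<and> (\<exists>k'. matched k' (Suc k)))"
proof (induction k)
  case (Suc k)
  then show ?case using matched_Suc by blast
qed (use matched_0 in blast)

lemma traj_lr_minima_eq:
  "traj_lr_minima A g x0 = {traj k | k. 1 \<le> k \<and> (\<forall>y\<in>traj ` {1..<k}. g (traj k) < g y)}"
  "traj_lr_minima A' g x0 = {traj' k | k. 1 \<le> k \<and> (\<forall>y\<in>traj' ` {1..<k}. g (traj' k) < g y)}"
  unfolding traj_lr_minima_def traj_def traj'_def by auto

lemma traj_lr_minima_subset:
  "traj_lr_minima A g x0 \<subseteq> traj_lr_minima A' g x0 \<union> (if g (A x0) = n then {A x0} else {})"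
proof
  fix x assume "x \<in> traj_lr_minima A g x0"
  then obtain k where k: "1 \<le> k" "\<forall>y\<in>traj ` {1..<k}. g (traj k) < g y" "x = traj k"
    unfolding traj_lr_minima_eq by blast
  show "x \<in> traj_lr_minima A' g x0 \<union> (if g (A x0) = n then {A x0} else {})"
  proof (cases "g (traj k) = n")
    case True
    have "k = 1"
    proof (rule ccontr)
      assume "k \<noteq> 1"
      then have "g (traj k) < g (traj 1)" using k by auto
      with True level_max[OF traj_in[of 1]] show False by simp
    qed
    with True k(3) show ?thesis by (simp add: traj_def)
  next
    case False
    then obtain k' where "matched k' k" using matched_ex_or_skipped by blast
    then have "1 \<le> k'" "\<forall>y\<in>traj' ` {1..<k'}. g (traj' k') < g y" "x = traj' k'"
      using k unfolding matched_def by auto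
    then have "x \<in> traj_lr_minima A' g x0" unfolding traj_lr_minima_eq by blast
    then show ?thesis by simp
  qed
qed

lemma traj_lr_minima_supset:
  "traj_lr_minima A' g x0 \<union> (if g (A x0) = n then {A x0} else {}) \<subseteq> traj_lr_minima A g x0"
proof
  fix x assume "x \<in> traj_lr_minima A' g x0 \<union> (if g (A x0) = n then {A x0} else {})"
  then consider k' where "1 \<le> k'" "\<forall>y\<in>traj' ` {1..<k'}. g (traj' k') < g y" "x = traj' k'"
    | "x = traj 1"
    unfolding traj_lr_minima_eq by (auto simp: traj_def split: if_splits)
  then show "x \<in> traj_lr_minima A g x0"
  proof cases
    case (1 k')
    obtain k where m: "matched k' k" using matched_ex by blast
    have "g (traj k) < n" using m traj'_in[of k'] level_max[OF traj_in[of k]] by (simp add: matched_def)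
    then have "\<forall>y\<in>traj ` {1..<k}. g (traj k) < g y"
      using 1 m unfolding matched_def by fastforce
    with 1 m show ?thesis unfolding traj_lr_minima_eq matched_def by auto
  next
    case 2
    then show ?thesis unfolding traj_lr_minima_eq by auto
  qed
qed

theorem traj_lr_minima_skip:
  "traj_lr_minima A g x0 = traj_lr_minima A' g x0 \<union> (if g (A x0) = n then {A x0} else {})"
  using traj_lr_minima_subset traj_lr_minima_supset by (rule equalityI)

end

section \<open>Colored permutations and the last step of the B-code\<close>

lemma word_eq_map_sig_col: "w = map (\<lambda>i. (sig w i, col w i)) [1..<Suc (length w)]"
  by (rule nth_equalityI) (simp_all del: upt_Suc add: sig_def col_def)

lemma in_G_iff:
  "in_G r n w \<longleftrightarrow> length w = n \<and> bij_betw (sig w) {1..n} {1..n} \<and> (\<forall>i\<in>{1..n}. col w i < r)"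
proof -
  have "map fst w = map (sig w) [1..<Suc (length w)]" "map snd w = map (col w) [1..<Suc (length w)]"
    by (subst word_eq_map_sig_col; simp del: upt_Suc)+
  then have "set (map fst w) = sig w ` {1..length w}" "set (map snd w) = col w ` {1..length w}"
    "distinct (map fst w) \<longleftrightarrow> inj_on (sig w) {1..length w}"
    by (simp_all del: upt_Suc add: distinct_map atLeastLessThanSuc_atLeastAtMost)
  moreover have "(\<forall>x\<in>set w. snd x < r) \<longleftrightarrow> (\<forall>z\<in>set (map snd w). z < r)"
    by simp
  ultimately show ?thesis
    unfolding in_G_def bij_betw_def by auto
qed


lemma in_G_length: "in_G r n w \<Longrightarrow> length w = n"
  by (simp add: in_G_iff)

lemma in_G_col_less: "in_G r n w \<Longrightarrow> i \<in> {1..n} \<Longrightarrow> col w i < r"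
  by (simp add: in_G_iff)

lemma in_G_sig_in: "in_G r n w \<Longrightarrow> i \<in> {1..n} \<Longrightarrow> sig w i \<in> {1..n}"
  unfolding in_G_iff using bij_betwE by blast

lemma in_G_sig_eq_iff:
  "in_G r n w \<Longrightarrow> i \<in> {1..n} \<Longrightarrow> j \<in> {1..n} \<Longrightarrow> sig w i = sig w j \<longleftrightarrow> i = j"
  unfolding in_G_iff bij_betw_def by (auto dest: inj_onD)

lemma in_G_sig_surj: "in_G r n w \<Longrightarrow> sig w ` {1..n} = {1..n}"
  unfolding in_G_iff bij_betw_def by simp

lemma indexed_set_snoc:
  "{f i ((b @ [x]) ! (i - 1)) | i. i \<in> {1..Suc (length b)} \<and> P i ((b @ [x]) ! (i - 1))}
     = {f i (b ! (i - 1)) | i. i \<in> {1..length b} \<and> P i (b ! (i - 1))}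
       \<union> (if P (Suc (length b)) x then {f (Suc (length b)) x} else {})"
    (is "?L = ?R \<union> ?N")
proof -
  have nth: "(b @ [x]) ! (i - 1) = (if i = Suc (length b) then x else b ! (i - 1))"
    if "i \<in> {1..Suc (length b)}" for i
    using that by (auto simp: nth_append)
  show ?thesis
  proof (intro equalityI subsetI)
    fix y assume "y \<in> ?L"
    then obtain i where "i \<in> {1..Suc (length b)}" "P i ((b @ [x]) ! (i - 1))"
      "y = f i ((b @ [x]) ! (i - 1))" by blast
    then show "y \<in> ?R \<union> ?N"
      using nth by (cases "i = Suc (length b)") auto
  next
    fix y assume "y \<in> ?R \<union> ?N"
    then consider i where "i \<in> {1..length b}" "P i (b ! (i - 1))" "y = f i (b ! (i - 1))"
      | "P (Suc (length b)) x" "y = f (Suc (length b)) x"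
      by (auto split: if_splits)
    then show "y \<in> ?L"
    proof cases
      case (1 i)
      then have "i \<in> {1..Suc (length b)}" "i \<noteq> Suc (length b)" by auto
      with 1 nth[of i] show ?thesis by (intro CollectI exI[of _ i]) auto
    next
      case 2
      with nth[of "Suc (length b)"] show ?thesis
        by (intro CollectI exI[of _ "Suc (length b)"]) auto
    qed
  qed
qed

lemma Maxb_snoc:
  "Maxb (b @ [x]) = Maxb b \<union> (if fst x = Suc (length b) then {(Suc (length b), snd x)} else {})"
  unfolding Maxb_def using indexed_set_snoc[of "\<lambda>i y. (i, snd y)" b x "\<lambda>i y. fst y = i"] by simp

lemma Minb_snoc:
  "Minb (b @ [x]) = Minb b \<union> (if fst x = 1 then {(Suc (length b), snd x)} else {})"
  unfolding Minb_def using indexed_set_snoc[of "\<lambda>i y. (i, snd y)" b x "\<lambda>i y. fst y = 1"] by simp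

lemma length_bcode_aux: "length (bcode_aux r j w) = j"
  by (induction j arbitrary: w) (simp_all add: Let_def)

lemma length_bcode: "length (bcode r w) = length w"
  by (simp add: bcode_def length_bcode_aux)

lemma bcode_colors_less:
  assumes "0 < r" and "x \<in> set (bcode r w)"
  shows "snd x < r"
proof -
  have "\<forall>x\<in>set (bcode_aux r j v). snd x < r" for j v
    using assms(1) by (induction j arbitrary: v) (auto simp: Let_def)
  then show ?thesis using assms(2) by (simp add: bcode_def)
qed

lemma pos_of_sig:
  assumes G: "in_G r n w" and c: "c \<in> {1..n}"
  shows "pos_of w (sig w c) = c"
proof -
  have "(LEAST k. k < length w \<and> fst (w ! k) = sig w c) = c - 1"
  proof (rule Least_equality)
    show "c - 1 < length w \<and> fst (w ! (c - 1)) = sig w c"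
      using c in_G_length[OF G] by (auto simp: sig_def)
    fix k assume "k < length w \<and> fst (w ! k) = sig w c"
    then have "Suc k = c" using in_G_sig_eq_iff[OF G _ c, of "Suc k"] in_G_length[OF G]
      by (auto simp: sig_def)
    then show "c - 1 \<le> k" by simp
  qed
  then show ?thesis using c by (simp add: pos_of_def)
qed

text \<open>If the letter of base value n + 1 sits in position c of pi^(n+1), right multiplication by
  (c^[e] n+1) moves it to the end with color 0. Dropping it leaves pi^(n), whose letter in
  position c is sigma_(n+1) with color z_c + z_(n+1).\<close>

locale max_removal =
  fixes r n :: nat and w w' :: "cletter list" and c :: nat
  assumes r_pos: "0 < r" and in_G: "in_G r (Suc n) w" and length': "length w' = n"
    and c_in: "c \<in> {1..Suc n}" and sig_c: "sig w c = Suc n"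
    and sig': "\<And>i. i \<in> {1..n} \<Longrightarrow> sig w' i = (if i = c then sig w (Suc n) else sig w i)"
    and col': "\<And>i. i \<in> {1..n} \<Longrightarrow>
      col w' i = (if i = c then (col w c + col w (Suc n)) mod r else col w i)"
begin

lemma sig_eq_Suc_iff: "i \<in> {1..Suc n} \<Longrightarrow> sig w i = Suc n \<longleftrightarrow> i = c"
  using in_G_sig_eq_iff[OF in_G _ c_in] sig_c by auto

lemma in_G': "in_G r n w'"
  unfolding in_G_iff
proof (intro conjI ballI)
  let ?\<tau> = "\<lambda>i. if i = c then Suc n else i"
  have sig'_\<tau>: "sig w' i = sig w (?\<tau> i)" if "i \<in> {1..n}" for i
    using sig'[OF that] by simp
  have \<tau>: "?\<tau> i \<in> {1..Suc n}" "sig w (?\<tau> i) \<noteq> Suc n" if "i \<in> {1..n}" for i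
    using that sig_eq_Suc_iff[of "?\<tau> i"] by auto
  have into: "sig w' ` {1..n} \<subseteq> {1..n}"
    using in_G_sig_in[OF in_G \<tau>(1)] \<tau>(2) sig'_\<tau> by fastforce
  have "inj_on (sig w') {1..n}"
  proof (rule inj_onI)
    fix i j assume ij: "i \<in> {1..n}" "j \<in> {1..n}" "sig w' i = sig w' j"
    then have "?\<tau> i = ?\<tau> j" using in_G_sig_eq_iff[OF in_G \<tau>(1) \<tau>(1)] sig'_\<tau> by metis
    then show "i = j" using ij(1,2) by (auto split: if_splits)
  qed
  with into show "bij_betw (sig w') {1..n} {1..n}"
    by (simp add: bij_betw_def endo_inj_surj)
  fix i assume "i \<in> {1..n}"
  then show "col w' i < r" using col' in_G_col_less[OF in_G] r_pos by simp
qed (rule length')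

end

lemma bcode_max_removal:
  assumes G: "in_G r (Suc n) w" and r: "0 < r"
  obtains c w' where "max_removal r n w w' c" "bcode r w = bcode r w' @ [(c, negmod r (col w c))]"
proof -
  obtain c where c: "c \<in> {1..Suc n}" "sig w c = Suc n"
    using in_G_sig_surj[OF G] by (metis atLeastAtMost_iff imageE le_refl le_add1 plus_1_eq_Suc)
  have lw: "length w = Suc n" using in_G_length[OF G] .
  define e where "e = negmod r (col w c)"
  define w' where "w' = (if c < Suc n then take n (rmul r w c e (Suc n)) else take n w)"
  have e: "(r - snd (w ! (c - 1)) mod r) mod r = e"
    using in_G_col_less[OF G c(1)] by (simp add: e_def negmod_def col_def)
  have lw': "length w' = n" unfolding w'_def rmul_def using lw by simp
  have bcode: "bcode r w = bcode r w' @ [(c, e)]"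
    unfolding bcode_def lw lw' using e pos_of_sig[OF G c(1)] c(2)
    by (simp add: Let_def w'_def)
  have nth: "w' ! (i - 1) = (if i = c then (sig w (Suc n), (col w c + col w (Suc n)) mod r) else w ! (i - 1))"
    if i: "i \<in> {1..n}" for i
  proof (cases "c < Suc n")
    case True
    have "(col w (Suc n) + (r - e mod r)) mod r = (col w c + col w (Suc n)) mod r"
      using add_negmod_mod[OF in_G_col_less[OF G c(1)]] negmod_less[OF r] by (simp add: e_def)
    then show ?thesis
      unfolding w'_def rmul_def using True i c(1) lw by (auto simp: nth_list_update sig_def col_def)
  next
    case False
    then show ?thesis unfolding w'_def using i c(1) by auto
  qed
  have "max_removal r n w w' c"
    by unfold_locales (use r G lw' c nth in \<open>simp_all add: sig_def col_def\<close>)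
  then show ?thesis using bcode unfolding e_def by (rule that)
qed

section \<open>Left-to-right maxima\<close>

definition lr_max :: "cletter list \<Rightarrow> nat \<Rightarrow> bool" where
  "lr_max w i \<longleftrightarrow> (\<forall>j. 1 \<le> j \<and> j < i \<longrightarrow> sig w j < sig w i)"

definition rl_min :: "cletter list \<Rightarrow> nat \<Rightarrow> bool" where
  "rl_min b j \<longleftrightarrow> (\<forall>k. j < k \<and> k \<le> length b \<longrightarrow> fst (b ! (j - 1)) < fst (b ! (k - 1)))"

definition lr_max_records :: "cletter list \<Rightarrow> (nat \<times> nat \<times> nat) set" where
  "lr_max_records w = {(i, sig w i, col w i) | i. i \<in> {1..length w} \<and> lr_max w i}"

definition rl_min_records :: "nat \<Rightarrow> cletter list \<Rightarrow> (nat \<times> nat \<times> nat) set" where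
  "rl_min_records r b =
     {(fst (b ! (j - 1)), j, negmod r (snd (b ! (j - 1)))) | j. j \<in> {1..length b} \<and> rl_min b j}"

lemma rl_min_snoc:
  assumes j: "j \<in> {1..length b}"
  shows "rl_min (b @ [x]) j \<longleftrightarrow> rl_min b j \<and> fst (b ! (j - 1)) < fst x"
proof -
  have split: "(\<forall>k. j < k \<and> k \<le> Suc (length b) \<longrightarrow> P k) \<longleftrightarrow>
      (\<forall>k. j < k \<and> k \<le> length b \<longrightarrow> P k) \<and> P (Suc (length b))" for P
    using j by (auto simp: le_Suc_eq)
  show ?thesis using j unfolding rl_min_def length_append_singleton split
    by (auto simp: nth_append_left)
qed

lemma rl_min_records_snoc:
  "rl_min_records r (b @ [(c, e)])
     = insert (c, Suc (length b), negmod r e) {x \<in> rl_min_records r b. fst x < c}"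
proof -
  let ?b = "b @ [(c, e)]"
  have "rl_min_records r ?b = {(fst (?b ! (j - 1)), j, negmod r (snd (?b ! (j - 1)))) | j.
      j \<in> {1..Suc (length b)} \<and> rl_min ?b j}"
    by (simp add: rl_min_records_def)
  also have "\<dots> = {(fst (b ! (j - 1)), j, negmod r (snd (b ! (j - 1)))) | j.
      j \<in> {1..length b} \<and> rl_min ?b j} \<union> {(c, Suc (length b), negmod r e)}"
    using indexed_set_snoc[of "\<lambda>j y. (fst y, j, negmod r (snd y))" b "(c, e)" "\<lambda>j y. rl_min ?b j"]
    by (simp add: rl_min_def)
  also have "\<dots> = insert (c, Suc (length b), negmod r e) {x \<in> rl_min_records r b. fst x < c}"
  proof -
    have cond: "j \<in> {1..length b} \<and> rl_min ?b j \<longleftrightarrow> j \<in> {1..length b} \<and> rl_min b j \<and> fst (b ! (j - 1)) < c"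
      for j using rl_min_snoc[of j b "(c, e)"] by auto
    show ?thesis unfolding rl_min_records_def cond by auto
  qed
  finally show ?thesis .
qed

context max_removal
begin

lemma sig'_below_c: "i \<in> {1..n} \<Longrightarrow> i \<noteq> c \<Longrightarrow> sig w' i = sig w i"
  using sig' by simp

lemma col'_below_c: "i \<in> {1..n} \<Longrightarrow> i \<noteq> c \<Longrightarrow> col w' i = col w i"
  using col' by simp

lemma lr_max_iff: "i \<in> {1..Suc n} \<Longrightarrow> lr_max w i \<longleftrightarrow> i = c \<or> (i < c \<and> lr_max w' i)"
proof -
  assume i: "i \<in> {1..Suc n}"
  have sig_less_c: "sig w j < sig w c" if "j \<in> {1..Suc n}" "j \<noteq> c" for j
    using in_G_sig_in[OF in_G that(1)] sig_eq_Suc_iff[OF that(1)] that(2) sig_c by auto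
  consider "i = c" | "i < c" | "c < i" by linarith
  then show ?thesis
  proof cases
    case 1
    then show ?thesis using sig_less_c c_in by (auto simp: lr_max_def)
  next
    case 2
    then have "sig w' j = sig w j" if "1 \<le> j" "j \<le> i" for j
      using sig'_below_c that c_in by auto
    then show ?thesis using 2 by (auto simp: lr_max_def)
  next
    case 3
    then have "\<not> sig w c < sig w i"
      using sig_less_c[OF i] sig_c by simp
    then have "\<not> lr_max w i"
      using 3 c_in unfolding lr_max_def by auto
    then show ?thesis using 3 by simp
  qed
qed

lemma lr_max_records_removal:
  "lr_max_records w = insert (c, Suc n, col w c) {x \<in> lr_max_records w'. fst x < c}"
proof -
  have "lr_max_records w = {(i, sig w i, col w i) | i. i \<in> {1..Suc n} \<and> (i = c \<or> (i < c \<and> lr_max w' i))}"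
    unfolding lr_max_records_def in_G_length[OF in_G] using lr_max_iff by blast
  also have "\<dots> = insert (c, Suc n, col w c) {(i, sig w' i, col w' i) | i. i \<in> {1..n} \<and> i < c \<and> lr_max w' i}"
    using c_in sig_c sig'_below_c col'_below_c by fastforce
  also have "\<dots> = insert (c, Suc n, col w c) {x \<in> lr_max_records w'. fst x < c}"
    unfolding lr_max_records_def length' by auto
  finally show ?thesis .
qed

end

theorem lr_max_records_bcode:
  "in_G r n w \<Longrightarrow> 0 < r \<Longrightarrow> lr_max_records w = rl_min_records r (bcode r w)"
proof (induction n arbitrary: w)
  case 0
  then show ?case by (simp add: in_G_iff lr_max_records_def rl_min_records_def bcode_def)
next
  case (Suc n)
  obtain c w' where R: "max_removal r n w w' c"
    and b: "bcode r w = bcode r w' @ [(c, negmod r (col w c))]"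
    using bcode_max_removal[OF Suc.prems] .
  interpret max_removal r n w w' c by (rule R)
  show ?case
    unfolding lr_max_records_removal b rl_min_records_snoc Suc.IH[OF in_G' r_pos]
    using length_bcode[of r w'] length' negmod_negmod[OF in_G_col_less[OF in_G c_in]] by simp
qed

lemma Lmal_eq_records: "Lmal w = (\<lambda>(i, s, z). (s, z)) ` lr_max_records w"
proof -
  have "w ! (i - 1) = (sig w i, col w i)" for i
    by (simp add: sig_def col_def)
  then show ?thesis
    unfolding Lmal_def lr_max_records_def lr_max_def setcompr_eq_image image_image by simp
qed

lemma Lmap_eq_records: "Lmap w = (\<lambda>(i, s, z). (i, z)) ` lr_max_records w"
  unfolding Lmap_def lr_max_records_def lr_max_def setcompr_eq_image image_image by simp

lemma negate_Rmip_eq_records: "negate_colors r (Rmip b) = (\<lambda>(c, j, z). (j, z)) ` rl_min_records r b"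
  unfolding negate_colors_def Rmip_def rl_min_records_def rl_min_def setcompr_eq_image image_image
  by simp

lemma negate_Rmil_eq_records: "negate_colors r (Rmil b) = (\<lambda>(c, j, z). (c, z)) ` rl_min_records r b"
  unfolding negate_colors_def Rmil_def rl_min_records_def rl_min_def setcompr_eq_image image_image
  by (simp add: case_prod_unfold)

corollary Lmal_bcode: "in_G r n w \<Longrightarrow> 0 < r \<Longrightarrow> Lmal w = negate_colors r (Rmip (bcode r w))"
  by (simp add: Lmal_eq_records negate_Rmip_eq_records lr_max_records_bcode)

corollary Lmap_bcode: "in_G r n w \<Longrightarrow> 0 < r \<Longrightarrow> Lmap w = negate_colors r (Rmil (bcode r w))"
  by (simp add: Lmap_eq_records negate_Rmil_eq_records lr_max_records_bcode)

section \<open>Cycles\<close>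

definition cycle_record :: "nat \<Rightarrow> cletter list \<Rightarrow> nat \<Rightarrow> cletter" where
  "cycle_record r w i = (Min (cycle_of w i), (\<Sum>k\<in>cycle_of w i. col w k) mod r)"

lemma Cyc_eq_image: "Cyc r w = cycle_record r w ` {1..length w}"
  unfolding Cyc_def cycle_record_def by auto

lemma cycle_of_eq_range: "cycle_of w i = range (\<lambda>k. (sig w ^^ k) i)"
  unfolding cycle_of_def by auto

context max_removal
begin

lemma bij_sig: "bij_betw (sig w) {1..Suc n} {1..Suc n}"
  using in_G by (simp add: in_G_iff)

lemma sig'_skip:
  "y \<in> {1..Suc n} - {Suc n} \<Longrightarrow> sig w' y = (if sig w y = Suc n then sig w (Suc n) else sig w y)"
  using sig'[of y] sig_eq_Suc_iff[of y] by auto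

lemma cycle_of_reduced: "i \<in> {1..n} \<Longrightarrow> cycle_of w' i = cycle_of w i - {Suc n}"
proof -
  have "point_skipping {1..Suc n} (sig w) (sig w') (Suc n)"
    by unfold_locales (use bij_sig sig'_skip in auto)
  then show "i \<in> {1..n} \<Longrightarrow> cycle_of w' i = cycle_of w i - {Suc n}"
    unfolding cycle_of_eq_range by (rule point_skipping.orbit_skip) auto
qed

lemma cycle_of_subset: "i \<in> {1..Suc n} \<Longrightarrow> cycle_of w i \<subseteq> {1..Suc n}"
  unfolding cycle_of_eq_range by (rule orbit_subset[OF bij_sig])

lemma c_in_cycle_of:
  assumes i: "i \<in> {1..n}" and N: "Suc n \<in> cycle_of w i"
  shows "c \<in> cycle_of w i" "c \<noteq> Suc n"
proof -
  obtain k where k: "(sig w ^^ k) i = Suc n" using N by (auto simp: cycle_of_eq_range)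
  then obtain k' where k': "k = Suc k'" using i by (cases k) auto
  have "(sig w ^^ k') i \<in> {1..Suc n}" using funpow_bij_betw_in[OF bij_sig] i by simp
  then have "(sig w ^^ k') i = c" using k k' sig_eq_Suc_iff by simp
  then show "c \<in> cycle_of w i" by (auto simp: cycle_of_eq_range)
  show "c \<noteq> Suc n"
  proof
    assume "c = Suc n"
    then have "(sig w ^^ k) i \<noteq> Suc n"
      using funpow_avoids_fixed_point[OF bij_sig _ _, of "Suc n" i k] sig_c i by simp
    with k show False by simp
  qed
qed

lemma cycle_color_sum_reduced:
  assumes i: "i \<in> {1..n}"
  shows "(\<Sum>k\<in>cycle_of w' i. col w' k) mod r = (\<Sum>k\<in>cycle_of w i. col w k) mod r"
proof -
  let ?O = "cycle_of w i"
  have O: "?O \<subseteq> {1..Suc n}" using cycle_of_subset i by simp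
  have fin: "finite ?O" using O finite_subset by blast
  have same_col: "col w' k = col w k" if "k \<in> ?O - {Suc n, c}" for k
    using that O col' by auto
  show ?thesis
  proof (cases "Suc n \<in> ?O")
    case False
    have "c \<notin> ?O"
      using False orbit_closed[of c "sig w" i] sig_c by (auto simp: cycle_of_eq_range)
    then have "(\<Sum>k\<in>?O. col w' k) = (\<Sum>k\<in>?O. col w k)"
      using False same_col by (intro sum.cong) auto
    then show ?thesis using False cycle_of_reduced[OF i] by simp
  next
    case True
    note c = c_in_cycle_of[OF i True]
    have c': "c \<in> {1..n}" using c c_in by auto
    have rest: "(\<Sum>k\<in>?O - {Suc n} - {c}. col w' k) = (\<Sum>k\<in>?O - {Suc n} - {c}. col w k)"
      using same_col by (intro sum.cong) auto
    have "(\<Sum>k\<in>?O - {Suc n}. col w' k) = col w' c + (\<Sum>k\<in>?O - {Suc n} - {c}. col w k)"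
      using c fin rest by (simp add: sum.remove)
    moreover have "(\<Sum>k\<in>?O - {Suc n}. col w k) = col w c + (\<Sum>k\<in>?O - {Suc n} - {c}. col w k)"
      using c fin by (simp add: sum.remove)
    moreover have "(\<Sum>k\<in>?O. col w k) = col w (Suc n) + (\<Sum>k\<in>?O - {Suc n}. col w k)"
      using fin True by (simp add: sum.remove)
    moreover have "col w' c = (col w c + col w (Suc n)) mod r" using col' c' by simp
    ultimately show ?thesis using cycle_of_reduced[OF i]
      by (simp add: mod_add_left_eq ac_simps)
  qed
qed

lemma cycle_record_reduced:
  assumes i: "i \<in> {1..n}"
  shows "cycle_record r w' i = cycle_record r w i"
proof -
  have "cycle_of w i \<subseteq> {1..Suc n}" using cycle_of_subset i by simp
  then have "finite (cycle_of w i)" by (rule finite_subset) simp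
  moreover have "i \<in> cycle_of w i" using orbit_self by (simp add: cycle_of_eq_range)
  ultimately have "Min (cycle_of w i - {Suc n}) = Min (cycle_of w i)"
    using i by (intro Min_Diff_greater) auto
  then show ?thesis
    unfolding cycle_record_def using cycle_of_reduced[OF i] cycle_color_sum_reduced[OF i] by simp
qed

lemma cycle_record_last:
  "cycle_record r w (Suc n) = (if c = Suc n then (Suc n, col w (Suc n)) else cycle_record r w (sig w (Suc n)))"
proof (cases "c = Suc n")
  case True
  then have "(sig w ^^ k) (Suc n) = Suc n" for k
    using sig_c by (induction k) auto
  then have "cycle_of w (Suc n) = {Suc n}" by (auto simp: cycle_of_eq_range)
  then show ?thesis using True in_G_col_less[OF in_G, of "Suc n"] by (simp add: cycle_record_def)
next
  case False
  then show ?thesis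
    using orbit_of_image[OF _ bij_sig, of "Suc n"] by (simp add: cycle_record_def cycle_of_eq_range)
qed

lemma Cyc_removal: "Cyc r w = Cyc r w' \<union> (if c = Suc n then {(Suc n, col w (Suc n))} else {})"
proof -
  have "Cyc r w = insert (cycle_record r w (Suc n)) (cycle_record r w ` {1..n})"
    unfolding Cyc_eq_image in_G_length[OF in_G] by (simp add: atLeastAtMostSuc_conv)
  moreover have "cycle_record r w ` {1..n} = Cyc r w'"
    unfolding Cyc_eq_image length' using cycle_record_reduced by simp
  moreover have "cycle_record r w (Suc n) \<in> Cyc r w'" if "c \<noteq> Suc n"
  proof -
    have "sig w (Suc n) \<in> {1..n}"
      using in_G_sig_in[OF in_G, of "Suc n"] sig_eq_Suc_iff[of "Suc n"] that by auto
    then show ?thesis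
      using cycle_record_last cycle_record_reduced that unfolding Cyc_eq_image length' by simp
  qed
  ultimately show ?thesis using cycle_record_last by auto
qed

end

theorem Cyc_bcode: "in_G r n w \<Longrightarrow> 0 < r \<Longrightarrow> Cyc r w = negate_colors r (Maxb (bcode r w))"
proof (induction n arbitrary: w)
  case 0
  then show ?case by (simp add: in_G_iff Cyc_def bcode_def Maxb_def negate_colors_def)
next
  case (Suc n)
  obtain c w' where R: "max_removal r n w w' c"
    and b: "bcode r w = bcode r w' @ [(c, negmod r (col w c))]"
    using bcode_max_removal[OF Suc.prems] .
  interpret max_removal r n w w' c by (rule R)
  show ?case
    unfolding Cyc_removal b Maxb_snoc Suc.IH[OF in_G' r_pos]
    using length_bcode[of r w'] length' negmod_negmod[OF in_G_col_less[OF in_G c_in]]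
    by (auto simp: negate_colors_def)
qed

section \<open>Left-to-right minima of the cycle of 1\<close>

lemma act_bij:
  assumes G: "in_G r n w"
  shows "bij_betw (act r w) ({1..n} \<times> {..<r}) ({1..n} \<times> {..<r})"
proof -
  let ?\<Sigma> = "{1..n} \<times> {..<r}"
  have into: "act r w ` ?\<Sigma> \<subseteq> ?\<Sigma>"
    using in_G_sig_in[OF G] by (auto simp: act_def)
  have "inj_on (act r w) ?\<Sigma>"
  proof (rule inj_onI)
    fix x y assume x: "x \<in> ?\<Sigma>" and y: "y \<in> ?\<Sigma>" and eq: "act r w x = act r w y"
    then have "fst x = fst y" using in_G_sig_eq_iff[OF G] by (auto simp: act_def)
    moreover have "snd x mod r = snd y mod r"
      using eq \<open>fst x = fst y\<close> by (simp add: act_def nat_mod_eq_iff)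
    moreover have "snd x < r" "snd y < r" using x y by auto
    ultimately show "x = y" by (simp add: prod_eq_iff)
  qed
  with into show ?thesis by (simp add: bij_betw_def endo_inj_surj)
qed

text \<open>Cutting the orbit at the first return to x0 loses nothing: x0 has the least base value,
  so no later point can be a new minimum.\<close>

lemma Lmil_trajectory:
  fixes A :: "cletter \<Rightarrow> cletter"
  assumes M: "1 \<le> M" "(A ^^ M) x0 = x0" and x0_min: "\<And>k. fst x0 \<le> fst ((A ^^ k) x0)"
  shows "Lmil (map (\<lambda>k. (A ^^ k) x0) [1..<Suc M]) = traj_lr_minima A fst x0"
proof -
  define s where "s k = (A ^^ k) x0" for k
  have nth: "map s [1..<Suc M] ! q = s (Suc q)" if "q < M" for q
    using that by (simp del: upt_Suc)
  have bounded: "k \<le> M" if "\<forall>j. 1 \<le> j \<and> j < k \<longrightarrow> fst (s k) < fst (s j)" for k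
  proof (rule ccontr)
    assume "\<not> k \<le> M"
    then have "fst (s k) < fst (s M)" using that M(1) by auto
    with M(2) x0_min[of k] show False by (simp add: s_def)
  qed
  have "Lmil (map s [1..<Suc M]) = traj_lr_minima A fst x0"
  proof (intro equalityI subsetI)
    fix x assume "x \<in> Lmil (map s [1..<Suc M])"
    then obtain q where q: "q < M" "x = s (Suc q)" "\<forall>q'<q. fst (s (Suc q)) < fst (s (Suc q'))"
      unfolding Lmil_def by (auto simp: nth simp del: upt_Suc)
    have "fst (s (Suc q)) < fst (s j)" if "1 \<le> j" "j < Suc q" for j
      using q(3)[rule_format, of "j - 1"] that by simp
    then show "x \<in> traj_lr_minima A fst x0"
      unfolding traj_lr_minima_def using q(2) unfolding s_def
      by (intro CollectI exI[of _ "Suc q"]) simp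
  next
    fix x assume "x \<in> traj_lr_minima A fst x0"
    then obtain k where k: "1 \<le> k" "x = s k" "\<forall>j. 1 \<le> j \<and> j < k \<longrightarrow> fst (s k) < fst (s j)"
      unfolding traj_lr_minima_def s_def by blast
    have kM: "k - 1 < M" using bounded[OF k(3)] k(1) by simp
    have "\<forall>q'<k - 1. fst (s k) < fst (s (Suc q'))" using k by auto
    moreover have "map s [1..<Suc M] ! (k - 1) = s k" using nth[OF kM] k(1) by simp
    ultimately show "x \<in> Lmil (map s [1..<Suc M])"
      unfolding Lmil_def using k(2) kM nth
      by (intro CollectI exI[of _ "k - 1"]) (auto simp del: upt_Suc)
  qed
  then show ?thesis by (simp only: s_def[abs_def])
qed

lemma Lmic_eq_traj:
  assumes G: "in_G r n w" and n: "0 < n" and r: "0 < r"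
  shows "Lmic r w = traj_lr_minima (act r w) fst (1, 0)"
proof -
  let ?P = "\<lambda>m. 1 \<le> m \<and> (act r w ^^ m) (1, 0) = (1, 0)"
  have x0: "(1, 0) \<in> {1..n} \<times> {..<r}" using n r by simp
  have min: "fst (1::nat, 0::nat) \<le> fst ((act r w ^^ k) (1, 0))" for k
    using funpow_bij_betw_in[OF act_bij[OF G] x0, of k] by auto
  obtain k0 where "0 < k0" "(act r w ^^ k0) (1, 0) = (1, 0)"
    using funpow_return[OF _ act_bij[OF G] x0] by auto
  then have "?P (LEAST m. ?P m)" by (intro LeastI[of ?P k0]) simp
  then show ?thesis
    unfolding Lmic_def Let_def using Lmil_trajectory[OF _ _ min] by simp
qed

lemma act_color_0: "in_G r n w \<Longrightarrow> i \<in> {1..n} \<Longrightarrow> act r w (i, 0) = (sig w i, col w i)"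
  using in_G_col_less by (simp add: act_def)

context max_removal
begin

lemma act_skip:
  assumes y: "fst y \<in> {1..n}"
  shows "act r w' y = (if fst (act r w y) = Suc n then act r w (act r w y) else act r w y)"
proof (cases "fst y = c")
  case True
  have "((col w c + col w (Suc n)) mod r + snd y) mod r = (col w (Suc n) + (col w c + snd y) mod r) mod r"
    by (simp add: mod_add_left_eq mod_add_right_eq ac_simps)
  then show ?thesis using True y sig' col' sig_c by (simp add: act_def)
next
  case False
  then have "sig w (fst y) \<noteq> Suc n" using y sig_eq_Suc_iff by simp
  then show ?thesis using False y sig' col' by (simp add: act_def)
qed

lemma Lmic_removal:
  assumes n: "0 < n"
  shows "Lmic r w = Lmic r w' \<union> (if sig w 1 = Suc n then {(Suc n, col w 1)} else {})"
proof -
  let ?S = "{y. fst y \<in> {1..Suc n}}"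
  have closed: "act r w y \<in> ?S" if "y \<in> ?S" for y
    using in_G_sig_in[OF in_G] that by (simp add: act_def)
  have no_double: "fst (act r w (act r w y)) \<noteq> Suc n"
    if "y \<in> ?S" "fst y \<noteq> Suc n" "fst (act r w y) = Suc n" for y
  proof -
    have "fst y = c" using that sig_eq_Suc_iff by (simp add: act_def)
    then have "sig w (Suc n) \<noteq> Suc n" using that(2) sig_eq_Suc_iff[of "Suc n"] by simp
    then show ?thesis using that(3) by (simp add: act_def)
  qed
  have "level_skipping ?S fst (Suc n) (act r w) (act r w') (1, 0)"
    by unfold_locales (use n closed no_double act_skip in auto)
  then have "traj_lr_minima (act r w) fst (1, 0) = traj_lr_minima (act r w') fst (1, 0)
      \<union> (if fst (act r w (1, 0)) = Suc n then {act r w (1, 0)} else {})"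
    by (rule level_skipping.traj_lr_minima_skip)
  then show ?thesis
    using Lmic_eq_traj[OF in_G _ r_pos] Lmic_eq_traj[OF in_G' n r_pos] act_color_0[OF in_G, of 1]
    by simp
qed

end

lemma Lmic_singleton:
  assumes G: "in_G r 1 w" and r: "0 < r"
  shows "Lmic r w = {(1, col w 1)}"
proof -
  have "fst ((act r w ^^ k) (1, 0)) = fst (1::nat, 0::nat)" for k
    using funpow_bij_betw_in[OF act_bij[OF G], of "(1, 0)" k] r by auto
  then have "traj_lr_minima (act r w) fst (1, 0) = {act r w (1, 0)}"
    by (rule traj_lr_minima_const)
  moreover have "sig w 1 = 1" using in_G_sig_in[OF G, of 1] by simp
  ultimately show ?thesis using Lmic_eq_traj[OF G _ r] act_color_0[OF G, of 1] by simp
qed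

theorem Lmic_bcode:
  assumes "in_G r n w" and "0 < n" and "0 < r"
  shows "Lmic r w = negate_colors r (Minb (bcode r w))"
  using assms(2,1,3)
proof (induction n arbitrary: w rule: nat_induct_non_zero)
  case 1
  obtain c w' where R: "max_removal r 0 w w' c"
    and b: "bcode r w = bcode r w' @ [(c, negmod r (col w c))]"
    using bcode_max_removal[of r 0 w] 1 by (metis One_nat_def)
  interpret max_removal r 0 w w' c by (rule R)
  have "c = 1" using c_in by simp
  then have "bcode r w = [(1, negmod r (col w 1))]"
    using b length' by (simp add: bcode_def)
  then show ?case
    using Lmic_singleton[OF _ r_pos] in_G negmod_negmod[OF in_G_col_less[OF in_G, of 1]]
    by (simp add: Minb_def negate_colors_def)
next
  case (Suc n)
  obtain c w' where R: "max_removal r n w w' c"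
    and b: "bcode r w = bcode r w' @ [(c, negmod r (col w c))]"
    using bcode_max_removal[OF Suc.prems] .
  interpret max_removal r n w w' c by (rule R)
  have "c = 1 \<longleftrightarrow> sig w 1 = Suc n" using sig_eq_Suc_iff[of 1] by auto
  then show ?case
    unfolding Lmic_removal[OF Suc.hyps(1)] b Minb_snoc Suc.IH[OF in_G' r_pos]
    using length_bcode[of r w'] length' negmod_negmod[OF in_G_col_less[OF in_G c_in]]
    by (auto simp: negate_colors_def)
qed

lemma snd_statistics_subset:
  "snd ` (Maxb b \<union> Minb b \<union> Rmil b \<union> Rmip b) \<subseteq> snd ` set b"
proof -
  have "snd (b ! (i - 1)) \<in> snd ` set b" if "i \<in> {1..length b}" for i
    using that by auto
  then show ?thesis unfolding Maxb_def Minb_def Rmil_def Rmip_def by auto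
qed

lemma colpart_negate_bcode_statistic:
  assumes "0 < r" and "S \<in> {Maxb (bcode r w), Minb (bcode r w), Rmil (bcode r w), Rmip (bcode r w)}"
    and "t < r"
  shows "colpart (negate_colors r S) t = colpart S (negmod r t)"
proof (rule colpart_negate_colors[OF _ assms(3)])
  have "snd ` S \<subseteq> snd ` set (bcode r w)"
    using assms(2) snd_statistics_subset[of "bcode r w"] by blast
  then show "\<forall>x\<in>S. snd x < r" using bcode_colors_less[OF assms(1)] by fastforce
qed

theorem lemma3p4:
  fixes r n :: nat and w :: "cletter list"
  assumes "r \<ge> 1" and "n \<ge> 1" and "in_G r n w"
  defines "b \<equiv> bcode r w"
  shows "colpart (Cyc r w) 0 = colpart (Maxb b) 0
       \<and> colpart (Lmic r w) 0 = colpart (Minb b) 0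
       \<and> colpart (Lmap w) 0 = colpart (Rmil b) 0
       \<and> colpart (Lmal w) 0 = colpart (Rmip b) 0
       \<and> (\<forall>t. 1 \<le> t \<and> t \<le> r - 1 \<longrightarrow>
            colpart (Cyc r w) t = colpart (Maxb b) (r - t)
          \<and> colpart (Lmic r w) t = colpart (Minb b) (r - t)
          \<and> colpart (Lmap w) t = colpart (Rmil b) (r - t)
          \<and> colpart (Lmal w) t = colpart (Rmip b) (r - t))"
proof -
  have r: "0 < r" and n: "0 < n" using assms(1,2) by simp_all
  note stats = Cyc_bcode[OF assms(3) r] Lmic_bcode[OF assms(3) n r]
    Lmap_bcode[OF assms(3) r] Lmal_bcode[OF assms(3) r]
  have zero: "colpart (negate_colors r S) 0 = colpart S 0"
    if "S \<in> {Maxb b, Minb b, Rmil b, Rmip b}" for S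
    using colpart_negate_bcode_statistic[OF r that[unfolded b_def] r] by (simp add: negmod_def)
  have pos: "colpart (negate_colors r S) t = colpart S (r - t)"
    if "S \<in> {Maxb b, Minb b, Rmil b, Rmip b}" "1 \<le> t" "t \<le> r - 1" for S t
    using colpart_negate_bcode_statistic[OF r that(1)[unfolded b_def], of t] that(2,3)
    by (simp add: negmod_def)
  show ?thesis
    unfolding stats b_def[symmetric] by (simp add: zero pos)
qed

end
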